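(* Let $\mathbf{B}\in\dot{\mathbb{P}}(\mathbb{L}(\mathbf{C}))$. Then $\mathbf{B}$ is singular for $\mathcal{D}(\mathbf{C},\Omega)$ if and only if there exists $\omega^*\in\Omega$ such that in every sufficient cause representation $(\mathbf{A},\mathfrak{B})$ for $\mathcal{D}(\mathbf{C},\Omega)$: (i) for every $\mathbf{B}^*\in\dot{\mathbb{P}}(\mathbb{L}(\mathbf{C}))$ with $|\mathbf{B}^*|=|\mathbf{C}|$ and $\mathbf{B}\subseteq\mathbf{B}^*$ there exists $\mathbf{B}_i\in\mathfrak{B}$ with $\mathbf{B}_i\subseteq\mathbf{B}^*$ and $A_i(\omega^* )=1$; and (ii) for every $\mathbf{B}_i\in\mathfrak{B}$ with $\mathbf{B}\not\subseteq\mathbf{B}_i$, $A_i(\omega^* )=0$.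
   Context: Events are binary random variables on a population $\Omega$; $\overline{X}=1-X$; $\mathbb{L}(\mathbf{C})=\mathbf{C}\cup\{\overline{X}:X\in\mathbf{C}\}$; $\dot{\mathbb{P}}(\mathbb{L}(\mathbf{C}))$ is the set of subsets of $\mathbb{L}(\mathbf{C})$ not containing both $X$ and $\overline{X}$; $(L)_{\mathbf{c}}$ is the value of literal $L$ under assignment $\mathbf{c}$; $\bigwedge(\mathbf{B})=\min_{L\in\mathbf{B}}L$. Potential outcomes $\mathcal{D}(\mathbf{C},\Omega)$: $D_{\mathbf{c}}(\omega)\in\{0,1\}$. $\mathbf{B}$ is a sufficient cause for $D$ relative to $\mathbf{C}$ for $\omega^*$ if some $\mathbf{c}^*$ has $(\bigwedge(\mathbf{B}))_{\mathbf{c}^*}=1$ and $D_{\mathbf{c}}(\omega^* )=1$ whenever $(\bigwedge(\mathbf{B}))_{\mathbf{c}}=1$; minimal if no proper subset is such; singular for $\omega^*$ if it is a minimal sufficient cause for $\omega^*$ and no other $\mathbf{B}'\in\dot{\mathbb{P}}(\mathbb{L}(\mathbf{C}))$ is a minimal sufficient cause for $\omega^*$; singular for $\mathcal{D}(\mathbf{C},\Omega)$ if singular for some $\omega^*\in\Omega$. A sufficient cause representation $(\mathbf{A},\mathfrak{B})$ for $\mathcal{D}(\mathbf{C},\Omega)$: binary random variables $\mathbf{A}=\langle A_1,\dots,A_p\rangle$ on $\Omega$ unaffected by interventions on $\mathbf{C}$, paired with $\mathfrak{B}=\langle\mathbf{B}_1,\dots,\mathbf{B}_p\rangle$, $\mathbf{B}_i\in\dot{\mathbb{P}}(\mathbb{L}(\mathbf{C}))$,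 such that $D_{\mathbf{c}}(\omega)=1$ iff some $j$ has $A_j(\omega)=1$ and $(\bigwedge(\mathbf{B}_j))_{\mathbf{c}}=1$. *)

theory Defs
  imports Main "HOL-Library.FuncSet"
begin

text \<open>Events in C are named by elements of type 'v. A literal is a pair (X, b):
  (X, True) stands for X, (X, False) stands for its complement 1 - X.\<close>

type_synonym 'v literal = "'v \<times> bool"

definition lits :: "'v set \<Rightarrow> 'v literal set" where
  "lits C = C \<times> (UNIV :: bool set)"

definition compl_lit :: "'v literal \<Rightarrow> 'v literal" where
  "compl_lit L = (fst L, \<not> snd L)"

definition consistent_subsets :: "'v set \<Rightarrow> 'v literal set set" where
  "consistent_subsets C = {B. B \<subseteq> lits C \<and> (\<forall>L\<in>B. compl_lit L \<notin> B)}"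

definition assignments :: "'v set \<Rightarrow> ('v \<Rightarrow> bool) set" where
  "assignments C = (C \<rightarrow>\<^sub>E (UNIV :: bool set))"

definition lit_val :: "'v literal \<Rightarrow> ('v \<Rightarrow> bool) \<Rightarrow> bool" where
  "lit_val L c = (c (fst L) = snd L)"

definition conj_val :: "'v literal set \<Rightarrow> ('v \<Rightarrow> bool) \<Rightarrow> bool" where
  "conj_val B c = (\<forall>L\<in>B. lit_val L c)"

text \<open>Potential outcomes D c \<omega> (D_c(\<omega>)).\<close>
definition sufficient_cause ::
  "'v set \<Rightarrow> (('v \<Rightarrow> bool) \<Rightarrow> 'w \<Rightarrow> bool) \<Rightarrow> 'v literal set \<Rightarrow> 'w \<Rightarrow> bool" where
  "sufficient_cause C D B \<omega> \<longleftrightarrow>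
     (\<exists>c\<in>assignments C. conj_val B c) \<and>
     (\<forall>c\<in>assignments C. conj_val B c \<longrightarrow> D c \<omega>)"

definition minimal_sufficient_cause ::
  "'v set \<Rightarrow> (('v \<Rightarrow> bool) \<Rightarrow> 'w \<Rightarrow> bool) \<Rightarrow> 'v literal set \<Rightarrow> 'w \<Rightarrow> bool" where
  "minimal_sufficient_cause C D B \<omega> \<longleftrightarrow>
     sufficient_cause C D B \<omega> \<and> (\<forall>B'. B' \<subset> B \<longrightarrow> \<not> sufficient_cause C D B' \<omega>)"

definition singular_for ::
  "'v set \<Rightarrow> (('v \<Rightarrow> bool) \<Rightarrow> 'w \<Rightarrow> bool) \<Rightarrow> 'v literal set \<Rightarrow> 'w \<Rightarrow> bool" where
  "singular_for C D B \<omega> \<longleftrightarrow>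
     minimal_sufficient_cause C D B \<omega> \<and>
     (\<forall>B'\<in>consistent_subsets C. B' \<noteq> B \<longrightarrow> \<not> minimal_sufficient_cause C D B' \<omega>)"

definition singular ::
  "'v set \<Rightarrow> 'w set \<Rightarrow> (('v \<Rightarrow> bool) \<Rightarrow> 'w \<Rightarrow> bool) \<Rightarrow> 'v literal set \<Rightarrow> bool" where
  "singular C \<Omega> D B \<longleftrightarrow> (\<exists>\<omega>\<in>\<Omega>. singular_for C D B \<omega>)"

text \<open>Sufficient cause representation (A, frak B) with p components, indexed by i < p.
  The A_i are functions of \<omega> only, hence unaffected by interventions on C.\<close>
definition sc_representation ::
  "'v set \<Rightarrow> 'w set \<Rightarrow> (('v \<Rightarrow> bool) \<Rightarrow> 'w \<Rightarrow> bool) \<Rightarrow>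
   nat \<Rightarrow> (nat \<Rightarrow> 'w \<Rightarrow> bool) \<Rightarrow> (nat \<Rightarrow> 'v literal set) \<Rightarrow> bool" where
  "sc_representation C \<Omega> D p A Bs \<longleftrightarrow>
     (\<forall>i<p. Bs i \<in> consistent_subsets C) \<and>
     (\<forall>c\<in>assignments C. \<forall>\<omega>\<in>\<Omega>.
        D c \<omega> \<longleftrightarrow> (\<exists>j<p. A j \<omega> \<and> conj_val (Bs j) c))"

end

theory Submission
  imports Defs
begin

text \<open>B is singular for \<omega> exactly when D_c(\<omega>) equals the conjunction of B under
  every assignment c. Indeed, every minimal sufficient cause inside the full literal set of
  an assignment c with D_c(\<omega>) = 1 must be B; conversely every consistent sufficient cause
  contains B, for otherwise some assignment satisfies it but not B. Given this
  characterisation, conditions (i) and (ii) hold in every representation, and the canonical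
  representation -- one component per assignment c, with the full literal set of c,
  activated by D_c -- shows that they in turn force it.\<close>

lemma consistent_subset_lits: "B \<in> consistent_subsets C \<Longrightarrow> B \<subseteq> lits C"
  unfolding consistent_subsets_def by blast

definition assignment_lits :: "'v set \<Rightarrow> ('v \<Rightarrow> bool) \<Rightarrow> 'v literal set" where
  "assignment_lits C c = (\<lambda>X. (X, c X)) ` C"

lemma assignment_lits_consistent: "assignment_lits C c \<in> consistent_subsets C"
  unfolding assignment_lits_def consistent_subsets_def lits_def compl_lit_def by auto

lemma card_assignment_lits: "card (assignment_lits C c) = card C"
  unfolding assignment_lits_def by (rule card_image) (auto simp: inj_on_def)

lemma conj_val_iff_subset_assignment_lits:
  assumes "B \<subseteq> lits C"
  shows "conj_val B c \<longleftrightarrow> B \<subseteq> assignment_lits C c"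
  using assms unfolding conj_val_def lit_val_def assignment_lits_def lits_def
  by (force simp: image_iff)

lemma conj_val_assignment_lits_iff:
  assumes "c \<in> assignments C" "c' \<in> assignments C"
  shows "conj_val (assignment_lits C c) c' \<longleftrightarrow> c' = c"
proof
  assume "conj_val (assignment_lits C c) c'"
  then have "\<forall>X\<in>C. c' X = c X"
    unfolding conj_val_def lit_val_def assignment_lits_def by auto
  with assms show "c' = c"
    unfolding assignments_def by (intro extensionalityI[of c' C c]) (auto simp: PiE_iff)
qed (auto simp: conj_val_def lit_val_def assignment_lits_def)

lemma assignment_lits_subset_iff:
  assumes "c \<in> assignments C" "c' \<in> assignments C"
  shows "assignment_lits C c' \<subseteq> assignment_lits C c \<longleftrightarrow> c' = c"
proof -
  have "assignment_lits C c' \<subseteq> lits C"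
    by (rule consistent_subset_lits[OF assignment_lits_consistent])
  then have "assignment_lits C c' \<subseteq> assignment_lits C c \<longleftrightarrow> conj_val (assignment_lits C c') c"
    by (simp add: conj_val_iff_subset_assignment_lits)
  also have "\<dots> \<longleftrightarrow> c = c'"
    by (rule conj_val_assignment_lits_iff[OF assms(2,1)])
  finally show ?thesis
    by auto
qed

lemma full_consistent_subset_eq_assignment_lits:
  assumes "finite C" "B \<in> consistent_subsets C" "card B = card C"
  obtains c where "c \<in> assignments C" "B = assignment_lits C c"
proof -
  have B_lits: "B \<subseteq> C \<times> UNIV" and B_cons: "\<And>X b. (X, b) \<in> B \<Longrightarrow> (X, \<not> b) \<notin> B"
    using assms(2) unfolding consistent_subsets_def lits_def compl_lit_def by force+
  have "inj_on fst B"
  proof (rule inj_onI)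
    fix x y assume "x \<in> B" "y \<in> B" "fst x = fst y"
    moreover have "snd x = snd y"
    proof (rule ccontr)
      assume "snd x \<noteq> snd y"
      then have "y = (fst x, \<not> snd x)"
        using \<open>fst x = fst y\<close> by (auto simp: prod_eq_iff)
      then show False
        using B_cons[of "fst x" "snd x"] \<open>x \<in> B\<close> \<open>y \<in> B\<close> by simp
    qed
    ultimately show "x = y"
      by (simp add: prod_eq_iff)
  qed
  moreover have "finite B"
    using B_lits assms(1) by (simp add: finite_subset)
  ultimately have "fst ` B = C"
    using B_lits assms by (intro card_subset_eq) (auto simp: card_image)
  define c where "c X = (if X \<in> C then (X, True) \<in> B else undefined)" for X
  have "c \<in> assignments C"
    unfolding assignments_def c_def by auto
  moreover have "B = assignment_lits C c"
  proof (intro equalityI subsetI)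
    fix L assume "L \<in> B"
    moreover obtain X b where L: "L = (X, b)"
      by (cases L)
    ultimately have "X \<in> C" "c X = b"
      using B_lits B_cons[of X True] unfolding c_def by (cases b; auto)+
    then show "L \<in> assignment_lits C c"
      unfolding assignment_lits_def L by auto
  next
    fix L assume "L \<in> assignment_lits C c"
    then obtain X where "X \<in> C" "L = (X, c X)"
      unfolding assignment_lits_def by auto
    moreover obtain b where "(X, b) \<in> B"
      using \<open>fst ` B = C\<close> \<open>X \<in> C\<close> by force
    ultimately show "L \<in> B"
      using B_cons[of X b] unfolding c_def by (cases b) auto
  qed
  ultimately show thesis by (rule that)
qed

definition extend_assignment :: "'v set \<Rightarrow> 'v literal set \<Rightarrow> ('v \<Rightarrow> bool) \<Rightarrow> 'v \<Rightarrow> bool" where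
  "extend_assignment C B d X =
     (if X \<in> C then (if (X, \<not> d X) \<in> B then \<not> d X else d X) else undefined)"

lemma extend_assignment_in_assignments: "extend_assignment C B d \<in> assignments C"
  unfolding assignments_def extend_assignment_def by auto

lemma conj_val_extend_assignment:
  assumes "B \<in> consistent_subsets C"
  shows "conj_val B (extend_assignment C B d)"
  unfolding conj_val_def
proof
  fix L assume "L \<in> B"
  moreover obtain X b where L: "L = (X, b)"
    by (cases L)
  ultimately have "X \<in> C" "(X, b) \<in> B" "(X, \<not> b) \<notin> B"
    using assms unfolding consistent_subsets_def lits_def compl_lit_def by force+
  then show "lit_val L (extend_assignment C B d)"
    unfolding L lit_val_def extend_assignment_def by (cases "d X = b") auto
qed

lemma consistent_subset_satisfiable:
  "B \<in> consistent_subsets C \<Longrightarrow> \<exists>c\<in>assignments C. conj_val B c"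
  using extend_assignment_in_assignments conj_val_extend_assignment by blast

lemma separating_assignment:
  assumes "B \<subseteq> lits C" "B' \<in> consistent_subsets C" "\<not> B \<subseteq> B'"
  obtains c where "c \<in> assignments C" "conj_val B' c" "\<not> conj_val B c"
proof -
  obtain X b where L: "(X, b) \<in> B" "(X, b) \<notin> B'"
    using assms(3) by auto
  let ?c = "extend_assignment C B' (\<lambda>_. \<not> b)"
  have "X \<in> C"
    using assms(1) L(1) unfolding lits_def by auto
  then have "\<not> lit_val (X, b) ?c"
    using L(2) unfolding lit_val_def extend_assignment_def by auto
  then have "\<not> conj_val B ?c"
    using L(1) unfolding conj_val_def by blast
  then show thesis
    using that extend_assignment_in_assignments conj_val_extend_assignment[OF assms(2)]
    by blast
qed

lemma consistent_subsets_mono: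
  "B \<in> consistent_subsets C \<Longrightarrow> B' \<subseteq> B \<Longrightarrow> B' \<in> consistent_subsets C"
  unfolding consistent_subsets_def by blast

lemma sufficient_cause_contains_minimal:
  assumes "finite B" "sufficient_cause C D B \<omega>"
  obtains B' where "B' \<subseteq> B" "minimal_sufficient_cause C D B' \<omega>"
proof -
  let ?P = "\<lambda>B'. B' \<subseteq> B \<and> sufficient_cause C D B' \<omega>"
  obtain B' where B': "?P B'" and least: "\<And>B''. ?P B'' \<Longrightarrow> card B' \<le> card B''"
    using ex_has_least_nat[of ?P B card] assms(2) by auto
  have "\<not> sufficient_cause C D B'' \<omega>" if "B'' \<subset> B'" for B''
  proof
    assume "sufficient_cause C D B'' \<omega>"
    then have "card B' \<le> card B''"
      using least B' that by blast
    moreover have "card B'' < card B'"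
      using psubset_card_mono[OF finite_subset[OF _ assms(1)] that] B' by blast
    ultimately show False
      by simp
  qed
  then show thesis
    using B' that unfolding minimal_sufficient_cause_def by blast
qed

lemma sufficient_cause_assignment_lits:
  "c \<in> assignments C \<Longrightarrow> D c \<omega> \<Longrightarrow> sufficient_cause C D (assignment_lits C c) \<omega>"
  unfolding sufficient_cause_def by (auto simp: conj_val_assignment_lits_iff)

lemma conj_val_if_singular_for:
  assumes "finite C" "singular_for C D B \<omega>" "c \<in> assignments C" "D c \<omega>"
  shows "conj_val B c"
proof -
  have "finite (assignment_lits C c)"
    using assms(1) unfolding assignment_lits_def by simp
  moreover have "sufficient_cause C D (assignment_lits C c) \<omega>"
    using sufficient_cause_assignment_lits[where D = D] assms(3,4) .
  ultimately obtain B' where B': "B' \<subseteq> assignment_lits C c" "minimal_sufficient_cause C D B' \<omega>"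
    by (rule sufficient_cause_contains_minimal)
  have "B' \<in> consistent_subsets C"
    using consistent_subsets_mono[OF assignment_lits_consistent B'(1)] .
  then have "B' = B"
    using assms(2) B'(2) unfolding singular_for_def by blast
  then show ?thesis
    using B'(1) unfolding conj_val_def lit_val_def assignment_lits_def by auto
qed

lemma singular_for_iff_outcome_eq_conj:
  assumes "finite C" "B \<in> consistent_subsets C"
  shows "singular_for C D B \<omega> \<longleftrightarrow> (\<forall>c\<in>assignments C. D c \<omega> \<longleftrightarrow> conj_val B c)"
proof
  assume singular: "singular_for C D B \<omega>"
  then have suff: "sufficient_cause C D B \<omega>"
    unfolding singular_for_def minimal_sufficient_cause_def by blast
  show "\<forall>c\<in>assignments C. D c \<omega> \<longleftrightarrow> conj_val B c"
  proof (intro ballI iffI)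
    fix c assume "c \<in> assignments C" "D c \<omega>"
    then show "conj_val B c"
      by (rule conj_val_if_singular_for[where D = D, OF assms(1) singular])
  next
    fix c assume "c \<in> assignments C" "conj_val B c"
    then show "D c \<omega>"
      using suff unfolding sufficient_cause_def by blast
  qed
next
  assume outcome: "\<forall>c\<in>assignments C. D c \<omega> \<longleftrightarrow> conj_val B c"
  have B_lits: "B \<subseteq> lits C"
    using consistent_subset_lits[OF assms(2)] .
  have suff: "sufficient_cause C D B \<omega>"
    unfolding sufficient_cause_def using outcome consistent_subset_satisfiable[OF assms(2)] by blast
  have contains_B: "B \<subseteq> B'" if "B' \<in> consistent_subsets C" "sufficient_cause C D B' \<omega>" for B'
  proof (rule ccontr)
    assume "\<not> B \<subseteq> B'"
    with B_lits that(1) obtain c where "c \<in> assignments C" "conj_val B' c" "\<not> conj_val B c"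
      by (rule separating_assignment)
    then show False
      using that(2) outcome unfolding sufficient_cause_def by blast
  qed
  have "minimal_sufficient_cause C D B \<omega>"
    unfolding minimal_sufficient_cause_def
  proof (intro conjI allI impI suff notI)
    fix B' assume "B' \<subset> B" "sufficient_cause C D B' \<omega>"
    then show False
      using contains_B consistent_subsets_mono[OF assms(2)] by blast
  qed
  moreover have "\<not> minimal_sufficient_cause C D B' \<omega>"
    if "B' \<in> consistent_subsets C" "B' \<noteq> B" for B'
  proof
    assume "minimal_sufficient_cause C D B' \<omega>"
    then have "B \<subset> B'" "\<forall>B''. B'' \<subset> B' \<longrightarrow> \<not> sufficient_cause C D B'' \<omega>"
      using that contains_B unfolding minimal_sufficient_cause_def by blast+
    then show False
      using suff by blast
  qed
  ultimately show "singular_for C D B \<omega>"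
    unfolding singular_for_def by blast
qed

lemma representation_active_below_full_extensions:
  assumes "finite C" "B \<in> consistent_subsets C" "sc_representation C \<Omega> D p A Bs" "\<omega> \<in> \<Omega>"
    and outcome: "\<forall>c\<in>assignments C. D c \<omega> \<longleftrightarrow> conj_val B c"
    and "Bstar \<in> consistent_subsets C" "card Bstar = card C" "B \<subseteq> Bstar"
  shows "\<exists>i<p. Bs i \<subseteq> Bstar \<and> A i \<omega>"
proof -
  obtain c where c: "c \<in> assignments C" "Bstar = assignment_lits C c"
    using full_consistent_subset_eq_assignment_lits assms(1,6,7) by blast
  have "D c \<omega>"
    using outcome c assms(8) conj_val_iff_subset_assignment_lits consistent_subset_lits[OF assms(2)]
    by blast
  then obtain i where "i < p" "A i \<omega>" "conj_val (Bs i) c"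
    using assms(3,4) c(1) unfolding sc_representation_def by blast
  moreover have "Bs i \<subseteq> lits C"
    using assms(3) \<open>i < p\<close> consistent_subset_lits unfolding sc_representation_def by blast
  ultimately show ?thesis
    using c(2) conj_val_iff_subset_assignment_lits by blast
qed

lemma representation_inactive_off_B:
  assumes "B \<in> consistent_subsets C" "sc_representation C \<Omega> D p A Bs" "\<omega> \<in> \<Omega>"
    and outcome: "\<forall>c\<in>assignments C. D c \<omega> \<longleftrightarrow> conj_val B c"
    and "i < p" "\<not> B \<subseteq> Bs i"
  shows "\<not> A i \<omega>"
proof
  assume "A i \<omega>"
  have "Bs i \<in> consistent_subsets C"
    using assms(2,5) unfolding sc_representation_def by blast
  from consistent_subset_lits[OF assms(1)] this assms(6)
  obtain c where "c \<in> assignments C" "conj_val (Bs i) c" "\<not> conj_val B c"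
    by (rule separating_assignment)
  then show False
    using \<open>A i \<omega>\<close> assms(2,3,5) outcome unfolding sc_representation_def by blast
qed

lemma canonical_sc_representation:
  assumes "set cs = assignments C"
  shows "sc_representation C \<Omega> D (length cs) (\<lambda>i. D (cs ! i)) (\<lambda>i. assignment_lits C (cs ! i))"
  unfolding sc_representation_def
proof (intro conjI allI impI ballI assignment_lits_consistent)
  fix c \<omega> assume c: "c \<in> assignments C"
  then obtain k where "k < length cs" "cs ! k = c"
    using assms by (metis in_set_conv_nth)
  then show "D c \<omega> \<longleftrightarrow> (\<exists>j<length cs. D (cs ! j) \<omega> \<and> conj_val (assignment_lits C (cs ! j)) c)"
    using c assms conj_val_assignment_lits_iff nth_mem by metis
qed

lemma outcome_eq_conj_if_canonical_conditions:
  assumes "B \<in> consistent_subsets C" "set cs = assignments C"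
    and covers: "\<forall>Bstar\<in>consistent_subsets C. card Bstar = card C \<and> B \<subseteq> Bstar \<longrightarrow>
          (\<exists>i<length cs. assignment_lits C (cs ! i) \<subseteq> Bstar \<and> D (cs ! i) \<omega>)"
    and inactive: "\<forall>i<length cs. \<not> B \<subseteq> assignment_lits C (cs ! i) \<longrightarrow> \<not> D (cs ! i) \<omega>"
  shows "\<forall>c\<in>assignments C. D c \<omega> \<longleftrightarrow> conj_val B c"
proof (intro ballI)
  fix c assume c: "c \<in> assignments C"
  have B_sub_iff: "conj_val B c \<longleftrightarrow> B \<subseteq> assignment_lits C c"
    using conj_val_iff_subset_assignment_lits consistent_subset_lits[OF assms(1)] by blast
  show "D c \<omega> \<longleftrightarrow> conj_val B c"
  proof
    assume "D c \<omega>"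
    moreover obtain k where "k < length cs" "cs ! k = c"
      using assms(2) c by (metis in_set_conv_nth)
    ultimately show "conj_val B c"
      using inactive B_sub_iff by blast
  next
    assume "conj_val B c"
    then obtain i where i: "i < length cs" "assignment_lits C (cs ! i) \<subseteq> assignment_lits C c"
        "D (cs ! i) \<omega>"
      using covers assignment_lits_consistent card_assignment_lits B_sub_iff by blast
    have "cs ! i \<in> assignments C"
      using assms(2) i(1) nth_mem by blast
    then have "cs ! i = c"
      using assignment_lits_subset_iff c i(2) by blast
    then show "D c \<omega>"
      using i(3) by simp
  qed
qed

theorem mainTheorem14:
  fixes C :: "'v set" and \<Omega> :: "'w set"
    and D :: "('v \<Rightarrow> bool) \<Rightarrow> 'w \<Rightarrow> bool" and B :: "'v literal set"
  assumes "finite C"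
    and "B \<in> consistent_subsets C"
  shows "singular C \<Omega> D B \<longleftrightarrow>
    (\<exists>\<omega>\<in>\<Omega>. \<forall>p A Bs. sc_representation C \<Omega> D p A Bs \<longrightarrow>
        (\<forall>Bstar\<in>consistent_subsets C. card Bstar = card C \<and> B \<subseteq> Bstar \<longrightarrow>
            (\<exists>i<p. Bs i \<subseteq> Bstar \<and> A i \<omega>)) \<and>
        (\<forall>i<p. \<not> B \<subseteq> Bs i \<longrightarrow> \<not> A i \<omega>))"
    (is "_ \<longleftrightarrow> (\<exists>\<omega>\<in>\<Omega>. ?conditions \<omega>)")
proof
  assume "singular C \<Omega> D B"
  then obtain \<omega> where \<omega>: "\<omega> \<in> \<Omega>" and outcome: "\<forall>c\<in>assignments C. D c \<omega> \<longleftrightarrow> conj_val B c"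
    unfolding singular_def using singular_for_iff_outcome_eq_conj[OF assms, of D] by blast
  show "\<exists>\<omega>\<in>\<Omega>. ?conditions \<omega>"
  proof (intro bexI[OF _ \<omega>] allI impI conjI)
    fix p A Bs assume R: "sc_representation C \<Omega> D p A Bs"
    show "\<forall>Bstar\<in>consistent_subsets C. card Bstar = card C \<and> B \<subseteq> Bstar \<longrightarrow>
        (\<exists>i<p. Bs i \<subseteq> Bstar \<and> A i \<omega>)"
      using representation_active_below_full_extensions[OF assms R \<omega> outcome] by blast
    show "\<not> A i \<omega>" if "i < p" "\<not> B \<subseteq> Bs i" for i
      using representation_inactive_off_B[OF assms(2) R \<omega> outcome that] .
  qed
next
  assume "\<exists>\<omega>\<in>\<Omega>. ?conditions \<omega>"
  then obtain \<omega> where \<omega>: "\<omega> \<in> \<Omega>" "?conditions \<omega>"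
    by blast
  have "finite (assignments C)"
    unfolding assignments_def using assms(1) by (simp add: finite_PiE)
  then obtain cs where cs: "set cs = assignments C"
    using finite_list by blast
  have "\<forall>c\<in>assignments C. D c \<omega> \<longleftrightarrow> conj_val B c"
    using \<omega>(2)[rule_format, OF canonical_sc_representation[OF cs]]
    by (intro outcome_eq_conj_if_canonical_conditions[OF assms(2) cs]) blast+
  then show "singular C \<Omega> D B"
    unfolding singular_def using \<omega>(1) singular_for_iff_outcome_eq_conj[OF assms, of D] by blast
qed

end
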